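(* Let $X$ be an irreducible compact complex space, $f:X\to X$ an open holomorphic map and $(\kappa_n)_{n\ge0}$ an analytic sub-multiplicative cocycle for $f$. For $n\ge0$ put $\kappa_{-n}(x):=\max_{y\in f^{-n}(x)}\kappa_n(y)$. Let $l\ge1$ be an integer. Then, pointwise on $X$, $$\limsup_{n\to\infty}[\kappa_{-nl}]^{1/(nl)}=\limsup_{n\to\infty}[\kappa_{-n}]^{1/n}\quad\text{and}\quad\liminf_{n\to\infty}[\kappa_{-nl}]^{1/(nl)}=\liminf_{n\to\infty}[\kappa_{-n}]^{1/n}.$$
   Context: $f^n$ denotes the $n$-th iterate of $f$. A sequence of functions $\kappa_n:X\to[1,+\infty[$, $n\ge0$, is an analytic sub-multiplicative cocycle if for all $n,m\ge0$ and $x\in X$: (1) $\kappa_n$ is upper semi-continuous for the Zariski topology on $X$ and $\min_X\kappa_n=1$; (2) $\kappa_{n+m}(x)\le\kappa_n(x)\kappa_m(f^n(x))$. *)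

theory Defs
  imports "HOL-Analysis.Analysis"
begin

text \<open>Abstract rendering of the Zariski topology of a compact complex space X
(whose points form the type 'a): a topology T on UNIV.\<close>

definition irreducible_top :: "'a topology \<Rightarrow> bool" where
  "irreducible_top T \<longleftrightarrow> topspace T \<noteq> {} \<and>
     (\<forall>U V. openin T U \<and> openin T V \<and> U \<noteq> {} \<and> V \<noteq> {} \<longrightarrow> U \<inter> V \<noteq> {})"

definition usc_wrt :: "'a topology \<Rightarrow> ('a \<Rightarrow> real) \<Rightarrow> bool" where
  "usc_wrt T g \<longleftrightarrow> (\<forall>a. openin T {x \<in> topspace T. g x < a})"

definition analytic_submult_cocycle ::
    "'a topology \<Rightarrow> ('a \<Rightarrow> 'a) \<Rightarrow> (nat \<Rightarrow> 'a \<Rightarrow> real) \<Rightarrow> bool" where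
  "analytic_submult_cocycle T f \<kappa> \<longleftrightarrow>
     (\<forall>n. usc_wrt T (\<kappa> n) \<and> (\<forall>x. 1 \<le> \<kappa> n x) \<and> (\<exists>x. \<kappa> n x = 1)) \<and>
     (\<forall>n m x. \<kappa> (n + m) x \<le> \<kappa> n x * \<kappa> m ((f ^^ n) x))"

definition kappa_back :: "('a \<Rightarrow> 'a) \<Rightarrow> (nat \<Rightarrow> 'a \<Rightarrow> real) \<Rightarrow> nat \<Rightarrow> 'a \<Rightarrow> real" where
  "kappa_back f \<kappa> n x = Max (\<kappa> n ` {y. (f ^^ n) y = x})"

end

theory Submission
  imports Defs
begin

text \<open>Write \<open>v n = \<kappa>\<^sub>-\<^sub>n(x)\<close>. By the cocycle inequality, and since upper semicontinuous
functions on a compact space are bounded, \<open>v (a + b) \<le> (sup \<kappa>\<^sub>a) * v b\<close>. Hence \<open>v n\<close> and the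
values of \<open>v\<close> at the multiples of \<open>l\<close> adjacent to \<open>n\<close> differ by at most a constant factor \<open>K\<close>,
and \<open>K powr (1/n) \<longlonglongrightarrow> 1\<close>. As the roots \<open>v n powr (1/n)\<close> are bounded, this multiplicative
error becomes an additive error tending to 0, which changes neither limsup nor liminf.\<close>

lemma Limsup_compose_filterlim_le:
  assumes "filterlim g G F"
  shows "Limsup F (\<lambda>x. f (g x)) \<le> Limsup G f"
proof -
  have "Limsup F (\<lambda>x. f (g x)) \<le> Limsup (filtermap g F) f"
    by (rule Limsup_filtermap_ge)
  also have "\<dots> \<le> Limsup G f"
    using assms unfolding Limsup_def filterlim_def le_filter_def
    by (intro INF_superset_mono) auto
  finally show ?thesis .
qed

lemma Liminf_compose_filterlim_ge:
  assumes "filterlim g G F"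
  shows "Liminf G f \<le> Liminf F (\<lambda>x. f (g x))"
proof -
  have "Liminf G f \<le> Liminf (filtermap g F) f"
    using assms unfolding Liminf_def filterlim_def le_filter_def
    by (intro SUP_subset_mono) auto
  also have "\<dots> \<le> Liminf F (\<lambda>x. f (g x))"
    by (rule Liminf_filtermap_le)
  finally show ?thesis .
qed

lemma limsup_multiples_eq:
  fixes a e :: "nat \<Rightarrow> real" and l :: nat
  assumes "l > 0" and "e \<longlonglongrightarrow> 0"
    and "eventually (\<lambda>n. a n \<le> e n + a (n div l * l)) sequentially"
  shows "limsup (\<lambda>n. ereal (a (n * l))) = limsup (\<lambda>n. ereal (a n))"
proof (rule antisym)
  show "limsup (\<lambda>n. ereal (a (n * l))) \<le> limsup (\<lambda>n. ereal (a n))"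
    using limsup_subseq_mono[of "\<lambda>n. n * l" "\<lambda>n. ereal (a n)"] \<open>l > 0\<close>
    by (simp add: strict_mono_def o_def)
  have "limsup (\<lambda>n. ereal (a n)) \<le> limsup (\<lambda>n. ereal (e n) + ereal (a (n div l * l)))"
    using assms(3) by (intro Limsup_mono) (auto elim: eventually_mono)
  also have "\<dots> = limsup (\<lambda>n. ereal (a (n div l * l)))"
    using ereal_limsup_lim_add[of "\<lambda>n. ereal (e n)" 0 "\<lambda>n. ereal (a (n div l * l))"] assms(2)
    by (simp add: zero_ereal_def)
  also have "\<dots> \<le> limsup (\<lambda>n. ereal (a (n * l)))"
    using Limsup_compose_filterlim_le[OF filterlim_at_top_div_const_nat[OF \<open>l > 0\<close>],
        of "\<lambda>q. ereal (a (q * l))"] by simp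
  finally show "limsup (\<lambda>n. ereal (a n)) \<le> limsup (\<lambda>n. ereal (a (n * l)))" .
qed

lemma liminf_multiples_eq:
  fixes a e :: "nat \<Rightarrow> real" and l :: nat
  assumes "l > 0" and "e \<longlonglongrightarrow> 0"
    and "eventually (\<lambda>n. a ((n div l + 1) * l) \<le> e n + a n) sequentially"
  shows "liminf (\<lambda>n. ereal (a (n * l))) = liminf (\<lambda>n. ereal (a n))"
proof (rule antisym)
  show "liminf (\<lambda>n. ereal (a n)) \<le> liminf (\<lambda>n. ereal (a (n * l)))"
    using liminf_subseq_mono[of "\<lambda>n. n * l" "\<lambda>n. ereal (a n)"] \<open>l > 0\<close>
    by (simp add: strict_mono_def o_def)
  have "filterlim (\<lambda>n. n div l + 1) sequentially sequentially"
    using filterlim_compose[OF filterlim_Suc filterlim_at_top_div_const_nat[OF \<open>l > 0\<close>]]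
    by simp
  then have "liminf (\<lambda>n. ereal (a (n * l))) \<le> liminf (\<lambda>n. ereal (a ((n div l + 1) * l)))"
    by (rule Liminf_compose_filterlim_ge)
  also have "\<dots> \<le> liminf (\<lambda>n. ereal (e n) + ereal (a n))"
    using assms(3) by (intro Liminf_mono) (auto elim: eventually_mono)
  also have "\<dots> = liminf (\<lambda>n. ereal (a n))"
    using ereal_liminf_lim_add[of "\<lambda>n. ereal (e n)" 0 "\<lambda>n. ereal (a n)"] assms(2)
    by (simp add: zero_ereal_def)
  finally show "liminf (\<lambda>n. ereal (a (n * l))) \<le> liminf (\<lambda>n. ereal (a n))" .
qed

definition root_seq :: "(nat \<Rightarrow> real) \<Rightarrow> nat \<Rightarrow> real" where
  "root_seq v n = v n powr (1 / real n)"

lemma root_seq_ge_one: "1 \<le> v n \<Longrightarrow> 1 \<le> root_seq v n"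
  by (simp add: root_seq_def ge_one_powr_ge_zero)

lemma mult_le_add_excess:
  fixes c t B :: real
  assumes "1 \<le> c" "0 \<le> t" "t \<le> B"
  shows "c * t \<le> t + (c - 1) * B"
proof -
  have "(c - 1) * t \<le> (c - 1) * B" using assms by (intro mult_left_mono) auto
  then show ?thesis by (simp add: algebra_simps)
qed

lemma powr_le_mult_powr:
  fixes K v w :: real and i j n :: nat
  assumes "1 \<le> K" "1 \<le> w" "0 \<le> v" "v \<le> K * w" "0 < i" "i \<le> n" "0 < j" "j \<le> n"
  shows "v powr (1 / n) \<le> K powr (1 / i) * w powr (1 / j)"
proof -
  have "v powr (1 / n) \<le> (K * w) powr (1 / n)"
    using assms by (intro powr_mono2) auto
  also have "\<dots> = K powr (1 / n) * w powr (1 / n)"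
    by (rule powr_mult)
  also have "\<dots> \<le> K powr (1 / i) * w powr (1 / j)"
    using assms by (intro mult_mono powr_mono) (auto simp: frac_le)
  finally show ?thesis .
qed

context
  fixes v S :: "nat \<Rightarrow> real"
  assumes v_ge_one: "\<And>n. 1 \<le> v n"
    and S_ge_one: "\<And>i. 1 \<le> S i"
    and shift_le: "\<And>i j. v (i + j) \<le> S i * v j"
begin

lemma shift_le_geometric: "v n \<le> S 1 ^ n * v 0"
proof (induction n)
  case (Suc n)
  have "v (Suc n) \<le> S 1 * v n" using shift_le[of 1 n] by simp
  also have "\<dots> \<le> S 1 * (S 1 ^ n * v 0)"
    using Suc S_ge_one[of 1] by (intro mult_left_mono) auto
  finally show ?case by simp
qed simp

lemma root_seq_le: "root_seq v n \<le> S 1 * v 0"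
proof (cases "n = 0")
  case True
  then show ?thesis
    using S_ge_one[of 1] v_ge_one[of 0] mult_mono[of 1 "S 1" 1 "v 0"] by (simp add: root_seq_def)
next
  case False
  have "root_seq v n \<le> (S 1 ^ n * v 0) powr (1 / n)"
    unfolding root_seq_def using shift_le_geometric[of n] v_ge_one[of n] by (intro powr_mono2) auto
  also have "\<dots> = (S 1 ^ n) powr (1 / n) * v 0 powr (1 / n)"
    by (rule powr_mult)
  also have "(S 1 ^ n) powr (1 / n) = S 1"
    using False S_ge_one[of 1] by (simp add: powr_realpow[symmetric] powr_powr)
  also have "v 0 powr (1 / n) \<le> v 0 powr 1"
    using False v_ge_one[of 0] by (intro powr_mono) auto
  finally show ?thesis using S_ge_one[of 1] v_ge_one[of 0] by (simp add: mult_left_mono)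
qed

lemma comparable_to_multiples:
  assumes "l > 0"
  obtains K where "1 \<le> K" "\<And>n. v n \<le> K * v (n div l * l)"
    "\<And>n. v ((n div l + 1) * l) \<le> K * v n"
proof
  define K where "K = Max (S ` {..l})"
  have S_le_K: "S i \<le> K" if "i \<le> l" for i
    unfolding K_def using that by (intro Max_ge) auto
  show "1 \<le> K" using S_le_K[of 0] S_ge_one[of 0] by linarith
  show "v n \<le> K * v (n div l * l)" for n
  proof -
    have "v n \<le> S (n mod l) * v (n div l * l)"
      using shift_le[of "n mod l" "n div l * l"] by simp
    also have "\<dots> \<le> K * v (n div l * l)"
      using S_le_K[of "n mod l"] v_ge_one[of "n div l * l"] \<open>l > 0\<close>
      by (intro mult_right_mono) auto
    finally show ?thesis .
  qed
  show "v ((n div l + 1) * l) \<le> K * v n" for n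
  proof -
    have "n div l * l + n mod l = n" "n mod l < l"
      using \<open>l > 0\<close> by simp_all
    then have "(n div l + 1) * l = (l - n mod l) + n"
      unfolding distrib_right by linarith
    then have "v ((n div l + 1) * l) \<le> S (l - n mod l) * v n"
      using shift_le[of "l - n mod l" n] by simp
    also have "\<dots> \<le> K * v n"
      using S_le_K[of "l - n mod l"] v_ge_one[of n] by (intro mult_right_mono) auto
    finally show ?thesis .
  qed
qed

lemma root_seq_floor_multiple_le:
  assumes "l > 0" "1 \<le> K" "\<And>n. v n \<le> K * v (n div l * l)"
  shows "eventually (\<lambda>n. root_seq v n
           \<le> (K powr (1 / n) - 1) * (S 1 * v 0) + root_seq v (n div l * l)) sequentially"
  unfolding eventually_sequentially
proof (intro exI allI impI)
  fix n assume "l \<le> n"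
  define m where "m = n div l * l"
  have "0 < m" "m \<le> n"
    using \<open>l \<le> n\<close> \<open>l > 0\<close> by (auto simp: m_def div_times_less_eq_dividend div_greater_zero_iff)
  have "root_seq v n \<le> K powr (1 / n) * root_seq v m"
    unfolding root_seq_def
    using \<open>0 < m\<close> \<open>m \<le> n\<close> assms(2) assms(3)[of n, folded m_def] v_ge_one[of n] v_ge_one[of m]
    by (intro powr_le_mult_powr) auto
  also have "\<dots> \<le> root_seq v m + (K powr (1 / n) - 1) * (S 1 * v 0)"
    using assms(2) root_seq_ge_one[OF v_ge_one] root_seq_le
    by (intro mult_le_add_excess) (auto simp: ge_one_powr_ge_zero intro: order_trans[OF zero_le_one])
  finally show "root_seq v n \<le> (K powr (1 / n) - 1) * (S 1 * v 0) + root_seq v (n div l * l)"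
    by (simp add: m_def)
qed

lemma root_seq_ceiling_multiple_le:
  assumes "l > 0" "1 \<le> K" "\<And>n. v ((n div l + 1) * l) \<le> K * v n"
  shows "eventually (\<lambda>n. root_seq v ((n div l + 1) * l)
           \<le> (K powr (1 / n) - 1) * (S 1 * v 0) + root_seq v n) sequentially"
  unfolding eventually_sequentially
proof (intro exI allI impI)
  fix n assume "l \<le> n"
  define m where "m = (n div l + 1) * l"
  have "n div l * l + n mod l = n" "n mod l < l"
    using \<open>l > 0\<close> by simp_all
  then have "0 < n" "n \<le> m"
    using \<open>l \<le> n\<close> \<open>l > 0\<close> unfolding m_def distrib_right by linarith+
  have "root_seq v m \<le> K powr (1 / n) * root_seq v n"
    unfolding root_seq_def
    using \<open>0 < n\<close> \<open>n \<le> m\<close> assms(2) assms(3)[of n, folded m_def] v_ge_one[of n] v_ge_one[of m]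
    by (intro powr_le_mult_powr) auto
  also have "\<dots> \<le> root_seq v n + (K powr (1 / n) - 1) * (S 1 * v 0)"
    using assms(2) root_seq_ge_one[OF v_ge_one] root_seq_le
    by (intro mult_le_add_excess) (auto simp: ge_one_powr_ge_zero intro: order_trans[OF zero_le_one])
  finally show "root_seq v ((n div l + 1) * l) \<le> (K powr (1 / n) - 1) * (S 1 * v 0) + root_seq v n"
    by (simp add: m_def)
qed

lemma root_seq_multiples_limsup_liminf_eq:
  assumes "l > 0"
  shows "limsup (\<lambda>n. ereal (root_seq v (n * l))) = limsup (\<lambda>n. ereal (root_seq v n))"
    and "liminf (\<lambda>n. ereal (root_seq v (n * l))) = liminf (\<lambda>n. ereal (root_seq v n))"
proof -
  obtain K where K: "1 \<le> K" "\<And>n. v n \<le> K * v (n div l * l)"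
    "\<And>n. v ((n div l + 1) * l) \<le> K * v n"
    using comparable_to_multiples[OF assms] by blast
  have "(\<lambda>n. (K powr (1 / real n) - 1) * (S 1 * v 0)) \<longlonglongrightarrow> (K powr 0 - 1) * (S 1 * v 0)"
    using K(1) by (intro tendsto_intros lim_const_over_n) auto
  then have error_to_zero: "(\<lambda>n. (K powr (1 / real n) - 1) * (S 1 * v 0)) \<longlonglongrightarrow> 0"
    using K(1) by simp
  show "limsup (\<lambda>n. ereal (root_seq v (n * l))) = limsup (\<lambda>n. ereal (root_seq v n))"
    by (rule limsup_multiples_eq[OF assms error_to_zero root_seq_floor_multiple_le[OF assms K(1,2)]])
  show "liminf (\<lambda>n. ereal (root_seq v (n * l))) = liminf (\<lambda>n. ereal (root_seq v n))"
    by (rule liminf_multiples_eq[OF assms error_to_zero root_seq_ceiling_multiple_le[OF assms K(1,3)]])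
qed

end

lemma usc_bounded_above:
  assumes "compact_space T" "usc_wrt T g"
  obtains S where "\<And>y. y \<in> topspace T \<Longrightarrow> g y \<le> S"
proof -
  let ?U = "range (\<lambda>k::nat. {y \<in> topspace T. g y < real k})"
  have "\<forall>U\<in>?U. openin T U" using assms(2) unfolding usc_wrt_def by auto
  moreover have "topspace T \<subseteq> \<Union>?U"
    using reals_Archimedean2 by blast
  ultimately obtain F where F: "finite F" "F \<subseteq> ?U" "topspace T \<subseteq> \<Union>F"
    using compact_space_alt[THEN iffD1, OF assms(1)] by meson
  then obtain K where K: "finite K" "F = (\<lambda>k::nat. {y \<in> topspace T. g y < real k}) ` K"
    by (meson finite_subset_image)
  have "g y \<le> real (Max K)" if "y \<in> topspace T" for y
  proof -
    have "y \<in> \<Union>F" using F(3) that by blast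
    then obtain k where "k \<in> K" "g y < real k" using K(2) by auto
    moreover have "k \<le> Max K" using K(1) \<open>k \<in> K\<close> by auto
    ultimately show ?thesis by linarith
  qed
  then show ?thesis by (rule that)
qed

lemma finite_funpow_preimage:
  fixes f :: "'a \<Rightarrow> 'a"
  assumes "\<And>z. finite {y. f y = z}"
  shows "finite {y. (f ^^ n) y = z}"
proof (induction n arbitrary: z)
  case (Suc n)
  have "{y. (f ^^ Suc n) y = z} = (\<Union>w\<in>{w. (f ^^ n) w = z}. {y. f y = w})"
    by (auto simp: funpow_swap1)
  then show ?case using Suc assms by simp
qed simp

context
  fixes f :: "'a \<Rightarrow> 'a" and \<kappa> :: "nat \<Rightarrow> 'a \<Rightarrow> real"
  assumes surj: "surj f" and finite_fibres: "\<And>z. finite {y. f y = z}"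
begin

lemma kappa_back_ge: "(f ^^ n) y = z \<Longrightarrow> \<kappa> n y \<le> kappa_back f \<kappa> n z"
  unfolding kappa_back_def using finite_funpow_preimage[OF finite_fibres] by (intro Max_ge) auto

lemma kappa_back_attained: obtains y where "(f ^^ n) y = z" "kappa_back f \<kappa> n z = \<kappa> n y"
proof -
  have "{y. (f ^^ n) y = z} \<noteq> {}"
    using surjD[OF surj_fn[OF surj], of z n] by (auto simp: surj_def)
  then have "kappa_back f \<kappa> n z \<in> \<kappa> n ` {y. (f ^^ n) y = z}"
    unfolding kappa_back_def using finite_funpow_preimage[OF finite_fibres] by (intro Max_in) auto
  then show ?thesis using that by blast
qed

lemma kappa_back_add_le:
  assumes nonneg: "\<And>n y. 0 \<le> \<kappa> n y"
    and cocycle: "\<And>n m y. \<kappa> (n + m) y \<le> \<kappa> n y * \<kappa> m ((f ^^ n) y)"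
    and bound: "\<And>y. \<kappa> a y \<le> S"
  shows "kappa_back f \<kappa> (a + b) z \<le> S * kappa_back f \<kappa> b z"
proof -
  obtain y where y: "(f ^^ (a + b)) y = z" "kappa_back f \<kappa> (a + b) z = \<kappa> (a + b) y"
    by (rule kappa_back_attained)
  have "(f ^^ b) ((f ^^ a) y) = z"
    using y(1) funpow_add[of b a f] by (simp add: add.commute)
  then have "\<kappa> b ((f ^^ a) y) \<le> kappa_back f \<kappa> b z"
    by (rule kappa_back_ge)
  then have "\<kappa> a y * \<kappa> b ((f ^^ a) y) \<le> S * kappa_back f \<kappa> b z"
    using bound[of y] nonneg[of a y] nonneg[of b "(f ^^ a) y"] by (intro mult_mono) auto
  then show ?thesis
    using y(2) cocycle[of a b y] by linarith
qed

end

theorem lemma2p2: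
  fixes T :: "'a topology" and f :: "'a \<Rightarrow> 'a" and \<kappa> :: "nat \<Rightarrow> 'a \<Rightarrow> real"
    and l :: nat and x :: 'a
  assumes "topspace T = UNIV"
    and "compact_space T"
    and "irreducible_top T"
    and "continuous_map T T f"
    and "surj f"
    and "\<And>z. finite {y. f y = z}"
    and "analytic_submult_cocycle T f \<kappa>"
    and "l \<ge> 1"
  shows "(limsup (\<lambda>n. ereal (kappa_back f \<kappa> (n * l) x powr (1 / real (n * l))))
           = limsup (\<lambda>n. ereal (kappa_back f \<kappa> n x powr (1 / real n)))) \<and>
         (liminf (\<lambda>n. ereal (kappa_back f \<kappa> (n * l) x powr (1 / real (n * l))))
           = liminf (\<lambda>n. ereal (kappa_back f \<kappa> n x powr (1 / real n))))"
proof -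
  note cocycle = assms(7)[unfolded analytic_submult_cocycle_def]
  have "\<forall>n. \<exists>S. \<forall>y. \<kappa> n y \<le> S"
    using usc_bounded_above[OF assms(2)] cocycle assms(1) by (metis UNIV_I)
  then obtain S where S: "\<And>n y. \<kappa> n y \<le> S n" by metis
  have \<kappa>_ge_one: "\<And>n y. 1 \<le> \<kappa> n y" using cocycle by blast
  define v where "v n = kappa_back f \<kappa> n x" for n
  have "1 \<le> v n" for n
    using kappa_back_attained[OF assms(5,6)] \<kappa>_ge_one unfolding v_def by metis
  moreover have "1 \<le> S n" for n
    using S \<kappa>_ge_one order_trans by blast
  moreover have "v (i + j) \<le> S i * v j" for i j
    unfolding v_def using \<kappa>_ge_one cocycle S
    by (intro kappa_back_add_le[OF assms(5,6)]) (auto intro: order_trans[OF zero_le_one])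
  ultimately show ?thesis
    using root_seq_multiples_limsup_liminf_eq[of v S l] assms(8)
    by (simp add: root_seq_def v_def)
qed

end
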